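(* Let $F$ be a ternary quartic form over $\mathbb{C}$ (homogeneous of degree $4$ in $x=(x_0,x_1,x_2)$) with zero scheme $C\subseteq\mathbb{P}^2$. Then $C$ consists of two (possibly coincident) double lines, i.e. $F=(L_1L_2)^2$ for some linear forms $L_1,L_2$, if and only if all of the following five concomitants vanish on $F$: $$\alpha_x^2\beta_x^3\gamma_x(\alpha\gamma u)^2(\beta\gamma u),\quad \alpha_x^2\beta_x^2\gamma_x^2(\alpha\beta\gamma)^2,\quad \alpha_x^2\beta_x(\beta\gamma u)^2(\alpha\gamma u)(\alpha\beta\gamma),$$ $$\alpha_x\beta_x(\alpha\gamma u)(\beta\gamma u)(\alpha\beta\gamma)^2,\quad (\alpha\beta\gamma)^4.$$
   Context: Symbolic notation: $\alpha=(\alpha_0,\alpha_1,\alpha_2)$, $\beta$, $\gamma$ are triples of auxiliary variables, $u=(u_0,u_1,u_2)$ is a triple of (dual) variables, $\alpha_x=\alpha_0x_0+\alpha_1x_1+\alpha_2x_2$ (similarly $\beta_x,\gamma_x$), $(\alpha\beta\gamma)$ is the determinant of the $3\times3$ matrix with rows $\alpha,\beta,\gamma$, and $(\alpha\gamma u)$ etc. are defined likewise. Each expression above is homogeneous of degree $4$ in each of $\alpha,\beta,\gamma$; its value on $F$ is the polynomial in $x,u$ obtained by applying the differential operator $(1/4!)^3\,F(\partial_{\alpha_0},\partial_{\alpha_1},\partial_{\alpha_2})F(\partial_{\beta_0},\partial_{\beta_1},\partial_{\beta_2})F(\partial_{\gamma_0},\partial_{\gamma_1},\partial_{\gamma_2})$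 to it. "Vanishes on $F$" means this polynomial is identically zero. *)

theory Defs
  imports Complex_Main
begin

(* A ternary quartic form F over the complex numbers is given by its coefficients:
   F a b c is the coefficient of x0^a x1^b x2^c (only a+b+c = 4 is used).
   Vectors x = (x0,x1,x2), u = (u0,u1,u2) are functions nat => complex, read at 0,1,2. *)

definition quartic_eval :: "(nat \<Rightarrow> nat \<Rightarrow> nat \<Rightarrow> complex) \<Rightarrow> (nat \<Rightarrow> complex) \<Rightarrow> complex" where
  "quartic_eval F x = (\<Sum>a\<le>4. \<Sum>b\<le>4 - a. F a b (4 - a - b) * x 0 ^ a * x 1 ^ b * x 2 ^ (4 - a - b))"

definition lin :: "(nat \<Rightarrow> complex) \<Rightarrow> (nat \<Rightarrow> complex) \<Rightarrow> complex" where
  "lin L x = (\<Sum>i<3. L i * x i)"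

(* Levi-Civita symbol: determinant of the matrix with rows e_i, e_j, e_k *)
definition eps :: "nat \<Rightarrow> nat \<Rightarrow> nat \<Rightarrow> complex" where
  "eps i j k =
     (if (i,j,k) \<in> {(0,1,2),(1,2,0),(2,0,1)} then 1
      else if (i,j,k) \<in> {(0,2,1),(2,1,0),(1,0,2)} then -1 else 0)"

(* (p q u) with p = e_i, q = e_k:  sum_m eps i k m * u_m *)
definition dU :: "(nat \<Rightarrow> complex) \<Rightarrow> nat \<Rightarrow> nat \<Rightarrow> complex" where
  "dU u i k = (\<Sum>m<3. eps i k m * u m)"

definition idx4 :: "nat list set" where
  "idx4 = {xs. length xs = 4 \<and> set xs \<subseteq> {0..<3}}"

(* Value of (1/4!) F(d_alpha0, d_alpha1, d_alpha2) on the monomial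
   alpha_{i0} alpha_{i1} alpha_{i2} alpha_{i3}: if this monomial is alpha^k
   (k = exponent vector), the result is F_k * k0! k1! k2! / 4!. *)
definition symb :: "(nat \<Rightarrow> nat \<Rightarrow> nat \<Rightarrow> complex) \<Rightarrow> nat list \<Rightarrow> complex" where
  "symb F is =
     F (count_list is 0) (count_list is 1) (count_list is 2)
       * of_nat (fact (count_list is 0) * fact (count_list is 1) * fact (count_list is 2))
       / of_nat (fact 4)"

(* Symbolic evaluation: an expression of degree 4 in each of alpha, beta, gamma, written as
   sum over a,b,c in idx4 of  P a b c * alpha_{a!0}..alpha_{a!3} beta_{b!0}..beta_{b!3} gamma_{c!0}..gamma_{c!3},
   is sent (by linearity of the operator (1/4!)^3 F(d_alpha)F(d_beta)F(d_gamma)) to the value below. *)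
definition symb_eval :: "(nat \<Rightarrow> nat \<Rightarrow> nat \<Rightarrow> complex) \<Rightarrow> (nat list \<Rightarrow> nat list \<Rightarrow> nat list \<Rightarrow> complex) \<Rightarrow> complex" where
  "symb_eval F P = (\<Sum>a\<in>idx4. \<Sum>b\<in>idx4. \<Sum>c\<in>idx4. P a b c * symb F a * symb F b * symb F c)"

(* alpha_x^2 beta_x^3 gamma_x (alpha gamma u)^2 (beta gamma u) *)
definition conc1 :: "(nat \<Rightarrow> nat \<Rightarrow> nat \<Rightarrow> complex) \<Rightarrow> (nat \<Rightarrow> complex) \<Rightarrow> (nat \<Rightarrow> complex) \<Rightarrow> complex" where
  "conc1 F x u = symb_eval F (\<lambda>a b c.
     x (a!0) * x (a!1) * x (b!0) * x (b!1) * x (b!2) * x (c!0)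
     * dU u (a!2) (c!1) * dU u (a!3) (c!2) * dU u (b!3) (c!3))"

(* alpha_x^2 beta_x^2 gamma_x^2 (alpha beta gamma)^2 *)
definition conc2 :: "(nat \<Rightarrow> nat \<Rightarrow> nat \<Rightarrow> complex) \<Rightarrow> (nat \<Rightarrow> complex) \<Rightarrow> (nat \<Rightarrow> complex) \<Rightarrow> complex" where
  "conc2 F x u = symb_eval F (\<lambda>a b c.
     x (a!0) * x (a!1) * x (b!0) * x (b!1) * x (c!0) * x (c!1)
     * eps (a!2) (b!2) (c!2) * eps (a!3) (b!3) (c!3))"

(* alpha_x^2 beta_x (beta gamma u)^2 (alpha gamma u) (alpha beta gamma) *)
definition conc3 :: "(nat \<Rightarrow> nat \<Rightarrow> nat \<Rightarrow> complex) \<Rightarrow> (nat \<Rightarrow> complex) \<Rightarrow> (nat \<Rightarrow> complex) \<Rightarrow> complex" where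
  "conc3 F x u = symb_eval F (\<lambda>a b c.
     x (a!0) * x (a!1) * x (b!0)
     * dU u (b!1) (c!0) * dU u (b!2) (c!1) * dU u (a!2) (c!2)
     * eps (a!3) (b!3) (c!3))"

(* alpha_x beta_x (alpha gamma u) (beta gamma u) (alpha beta gamma)^2 *)
definition conc4 :: "(nat \<Rightarrow> nat \<Rightarrow> nat \<Rightarrow> complex) \<Rightarrow> (nat \<Rightarrow> complex) \<Rightarrow> (nat \<Rightarrow> complex) \<Rightarrow> complex" where
  "conc4 F x u = symb_eval F (\<lambda>a b c.
     x (a!0) * x (b!0) * dU u (a!1) (c!0) * dU u (b!1) (c!1)
     * eps (a!2) (b!2) (c!2) * eps (a!3) (b!3) (c!3))"

(* (alpha beta gamma)^4 *)
definition conc5 :: "(nat \<Rightarrow> nat \<Rightarrow> nat \<Rightarrow> complex) \<Rightarrow> complex" where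
  "conc5 F = symb_eval F (\<lambda>a b c.
     eps (a!0) (b!0) (c!0) * eps (a!1) (b!1) (c!1) * eps (a!2) (b!2) (c!2) * eps (a!3) (b!3) (c!3))"

end

(*
  If F = (L1 L2)^2, the symbol of F is the average of the six decomposable symbols obtained by
  placing L1 twice and L2 twice in four slots.  In each of the five concomitants the twelve
  symbolic positions can be grouped into four slots, each taking one position of every symbol,
  such that every factor lives inside one slot; on decomposable symbols the concomitant then
  evaluates slot by slot to products of linear forms and brackets.  The last four concomitants
  have a slot that is a bare bracket (alpha beta gamma) of three vectors from {L1, L2}, so they
  vanish; in the first one the 216 terms cancel.

  Conversely, pick p with c = F(p) nonzero.  On the line through p and w, i.e. for x = p + Y w
  and u = cross p w, the first concomitant is the sextic covariant T of the binary quartic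
  F(s p + t w), and the vanishing of its two leading coefficients gives c^3 F(w) = Q(w)^2 with
  the quadratic form Q(w) = 3 c F(p,p,w,w) - 2 F(p,p,p,w)^2 in polarized notation.  The second
  concomitant is a multiple of the Hessian determinant at p; the matrix of Q is a rank-one
  update of the Hessian by its image of p, so it is singular as well.  A singular ternary
  quadratic form over the complex numbers splits into two linear factors, and taking a square
  root of c^3 finishes.
*)

theory Submission
  imports Defs
begin

type_synonym vec = "nat \<Rightarrow> complex"
type_synonym mat3 = "nat \<Rightarrow> nat \<Rightarrow> complex"
type_synonym quartic = "nat \<Rightarrow> nat \<Rightarrow> nat \<Rightarrow> complex"

lemma sum_lessThan_3: "(\<Sum>i<3. f i) = f 0 + f 1 + f (2::nat)" for f :: "nat \<Rightarrow> 'a::comm_monoid_add"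
  by (simp add: numeral_3_eq_3 numeral_2_eq_2 add_ac)

lemma prod_lessThan_4: "(\<Prod>m<4. f m) = f 0 * f 1 * f 2 * f (3::nat)" for f :: "nat \<Rightarrow> 'a::comm_monoid_mult"
  by (simp add: numeral_eq_Suc mult_ac)

lemma sum_lessThan_6: "(\<Sum>r<6. f r) = f 0 + f 1 + f 2 + f 3 + f 4 + f (5::nat)"
  for f :: "nat \<Rightarrow> 'a::comm_monoid_add"
  by (simp add: numeral_eq_Suc add_ac)

lemma all_less_3: "(\<forall>i<3. P i) \<longleftrightarrow> P 0 \<and> P 1 \<and> P (2::nat)"
  by (auto simp: numeral_3_eq_3 numeral_2_eq_2 less_Suc_eq)

lemma idx4_eq_image: "idx4 = (\<lambda>(i,j,k,l). [i,j,k,l]) ` ({..<3} \<times> {..<3} \<times> {..<3} \<times> {..<3::nat})"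
proof (rule set_eqI, rule iffI)
  fix a assume "a \<in> idx4"
  then have "length a = 4" "set a \<subseteq> {0..<3}" by (auto simp: idx4_def)
  then obtain i j k l where "a = [i,j,k,l]"
    by (cases a; cases "tl a"; cases "tl (tl a)"; cases "tl (tl (tl a))"; auto)
  with \<open>set a \<subseteq> _\<close> show "a \<in> (\<lambda>(i,j,k,l). [i,j,k,l]) ` ({..<3} \<times> {..<3} \<times> {..<3} \<times> {..<3})"
    by (auto intro!: image_eqI[where x="(i,j,k,l)"])
qed (auto simp: idx4_def)

lemma sum_idx4: "(\<Sum>a\<in>idx4. g a) = (\<Sum>i<3. \<Sum>j<3. \<Sum>k<3. \<Sum>l<3. g [i,j,k,l])"
proof -
  have "inj_on (\<lambda>(i,j,k,l). [i,j,k,l::nat]) ({..<3} \<times> {..<3} \<times> {..<3} \<times> {..<3::nat})"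
    by (auto simp: inj_on_def)
  then show ?thesis
    unfolding idx4_eq_image by (simp add: sum.reindex sum.cartesian_product')
qed

lemma sum_idx4_prod: "(\<Sum>a\<in>idx4. \<Prod>m<4. f m (a!m)) = (\<Prod>m<4. \<Sum>i<3. f m i :: 'a::comm_semiring_1)"
  by (simp add: sum_idx4 prod_lessThan_4 sum_distrib_left[symmetric] sum_distrib_right[symmetric]
      mult.assoc)

lemma sum_idx4_prod_bij:
  assumes "bij_betw \<sigma> {..<4} {..<4::nat}"
  shows "(\<Sum>a\<in>idx4. \<Prod>m<4. f m (a ! \<sigma> m)) = (\<Prod>m<4. \<Sum>i<3. f m i :: 'a::comm_semiring_1)"
proof -
  define \<rho> where "\<rho> = inv_into {..<4} \<sigma>"
  have \<rho>: "bij_betw \<rho> {..<4} {..<4}" and \<rho>\<sigma>: "\<And>m. m < 4 \<Longrightarrow> \<rho> (\<sigma> m) = m"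
    using assms by (auto simp: \<rho>_def bij_betw_inv_into bij_betw_inv_into_left)
  have "(\<Prod>m<4. f m (a ! \<sigma> m)) = (\<Prod>n<4. f (\<rho> n) (a ! n))" for a
    using prod.reindex_bij_betw[OF assms, of "\<lambda>n. f (\<rho> n) (a ! n)"] by (simp add: \<rho>\<sigma>)
  then have "(\<Sum>a\<in>idx4. \<Prod>m<4. f m (a ! \<sigma> m)) = (\<Prod>n<4. \<Sum>i<3. f (\<rho> n) i)"
    using sum_idx4_prod[of "\<lambda>n. f (\<rho> n)"] by simp
  also have "\<dots> = (\<Prod>m<4. \<Sum>i<3. f m i)"
    by (rule prod.reindex_bij_betw[OF \<rho>])
  finally show ?thesis .
qed

lemma bij_betw_perm4:
  fixes xs :: "nat list"
  assumes "distinct xs" and "set xs = {0, 1, 2, 3}"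
  shows "bij_betw ((!) xs) {..<4} {..<4}"
proof -
  have "{0, 1, 2, 3} = {..<4::nat}"
    by (auto simp: numeral_eq_Suc less_Suc_eq)
  moreover have "length xs = 4"
    using distinct_card[OF assms(1)] assms(2) calculation by simp
  ultimately show ?thesis
    using assms by (intro bij_betw_nth) auto
qed

lemma ball_idx4: "(\<forall>a\<in>idx4. P a) \<longleftrightarrow> (\<forall>i<3. \<forall>j<3. \<forall>k<3. \<forall>l<3. P [i,j,k,l])"
  by (auto simp: idx4_eq_image)

lemma idx4_nth_less: "c \<in> idx4 \<Longrightarrow> m < 4 \<Longrightarrow> c!m < 3"
  unfolding idx4_def by (auto simp: subset_iff)

lemma count_list_012:
  "set xs \<subseteq> {..<3::nat} \<Longrightarrow> count_list xs 0 + count_list xs 1 + count_list xs 2 = length xs"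
  by (induction xs) (auto simp: numeral_3_eq_3 less_Suc_eq)

lemma sum_swap_out2: "(\<Sum>a\<in>A. \<Sum>b\<in>B. \<Sum>c\<in>C. f a b c) = (\<Sum>c\<in>C. \<Sum>a\<in>A. \<Sum>b\<in>B. f a b c)"
  by (subst sum.swap) (rule sum.cong[OF refl], rule sum.swap)

lemma sum_swap_out3: "(\<Sum>a\<in>A. \<Sum>b\<in>B. \<Sum>c\<in>C. \<Sum>r\<in>I. f a b c r) = (\<Sum>r\<in>I. \<Sum>a\<in>A. \<Sum>b\<in>B. \<Sum>c\<in>C. f a b c r)"
  by (simp add: sum.swap[of _ I])

section \<open>Polarization\<close>

definition polar :: "quartic \<Rightarrow> vec \<Rightarrow> vec \<Rightarrow> vec \<Rightarrow> vec \<Rightarrow> complex" where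
  "polar F v0 v1 v2 v3 = (\<Sum>a\<in>idx4. symb F a * v0 (a!0) * v1 (a!1) * v2 (a!2) * v3 (a!3))"

lemma polar_expand:
  "polar F v0 v1 v2 v3 = (\<Sum>i<3. \<Sum>j<3. \<Sum>k<3. \<Sum>l<3. symb F [i,j,k,l] * v0 i * v1 j * v2 k * v3 l)"
  unfolding polar_def sum_idx4 by simp

lemma quartic_eval_polar: "quartic_eval F x = polar F x x x x"
  unfolding quartic_eval_def polar_expand
  by (simp add: sum_lessThan_3 symb_def numeral_eq_Suc atMost_Suc fact_numeral field_simps power_def)

lemma symb_swap01: "symb F [i,j,k,l] = symb F [j,i,k,l]"
  unfolding symb_def by simp

lemma symb_swap12: "symb F [i,j,k,l] = symb F [i,k,j,l]"
  unfolding symb_def by simp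

lemma symb_swap23: "symb F [i,j,k,l] = symb F [i,j,l,k]"
  unfolding symb_def by simp

lemma polar_swap01: "polar F v0 v1 v2 v3 = polar F v1 v0 v2 v3"
proof -
  have "polar F v1 v0 v2 v3 = (\<Sum>j<3. \<Sum>i<3. \<Sum>k<3. \<Sum>l<3. symb F [j,i,k,l] * v1 j * v0 i * v2 k * v3 l)"
    by (rule polar_expand)
  also have "\<dots> = (\<Sum>i<3. \<Sum>j<3. \<Sum>k<3. \<Sum>l<3. symb F [j,i,k,l] * v1 j * v0 i * v2 k * v3 l)"
    by (rule sum.swap)
  also have "\<dots> = polar F v0 v1 v2 v3"
    unfolding polar_expand by (intro sum.cong refl) (simp add: symb_swap01[of F _ _] mult_ac)
  finally show ?thesis by simp
qed

lemma polar_swap12: "polar F v0 v1 v2 v3 = polar F v0 v2 v1 v3"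
proof -
  have "polar F v0 v2 v1 v3 = (\<Sum>i<3. \<Sum>k<3. \<Sum>j<3. \<Sum>l<3. symb F [i,k,j,l] * v0 i * v2 k * v1 j * v3 l)"
    by (rule polar_expand)
  also have "\<dots> = (\<Sum>i<3. \<Sum>j<3. \<Sum>k<3. \<Sum>l<3. symb F [i,k,j,l] * v0 i * v2 k * v1 j * v3 l)"
    by (intro sum.cong refl sum.swap)
  also have "\<dots> = polar F v0 v1 v2 v3"
    unfolding polar_expand by (intro sum.cong refl) (simp add: symb_swap12[of F _ _] mult_ac)
  finally show ?thesis by simp
qed

lemma polar_swap23: "polar F v0 v1 v2 v3 = polar F v0 v1 v3 v2"
proof -
  have "polar F v0 v1 v3 v2 = (\<Sum>i<3. \<Sum>j<3. \<Sum>l<3. \<Sum>k<3. symb F [i,j,l,k] * v0 i * v1 j * v3 l * v2 k)"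
    by (rule polar_expand)
  also have "\<dots> = (\<Sum>i<3. \<Sum>j<3. \<Sum>k<3. \<Sum>l<3. symb F [i,j,l,k] * v0 i * v1 j * v3 l * v2 k)"
    by (intro sum.cong refl sum.swap)
  also have "\<dots> = polar F v0 v1 v2 v3"
    unfolding polar_expand by (intro sum.cong refl) (simp add: symb_swap23[of F _ _] mult_ac)
  finally show ?thesis by simp
qed

lemma polar_cong:
  "(\<And>i. i < 3 \<Longrightarrow> v0 i = w0 i) \<Longrightarrow> (\<And>i. i < 3 \<Longrightarrow> v1 i = w1 i) \<Longrightarrow>
   (\<And>i. i < 3 \<Longrightarrow> v2 i = w2 i) \<Longrightarrow> (\<And>i. i < 3 \<Longrightarrow> v3 i = w3 i) \<Longrightarrow>
   polar F v0 v1 v2 v3 = polar F w0 w1 w2 w3"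
  unfolding polar_expand by (intro sum.cong refl) auto

lemma polar_linear2:
  "polar F v0 v1 (\<lambda>i. \<alpha> * v i + \<beta> * w i) v3 = \<alpha> * polar F v0 v1 v v3 + \<beta> * polar F v0 v1 w v3"
  unfolding polar_def by (simp add: sum.distrib sum_distrib_left algebra_simps)

lemma polar_linear3:
  "polar F v0 v1 v2 (\<lambda>i. \<alpha> * v i + \<beta> * w i) = \<alpha> * polar F v0 v1 v2 v + \<beta> * polar F v0 v1 v2 w"
  unfolding polar_def by (simp add: sum.distrib sum_distrib_left algebra_simps)

lemma polar_add_scaled:
  "polar F (\<lambda>i. v i + Y * w i) v1 v2 v3 = polar F v v1 v2 v3 + Y * polar F w v1 v2 v3"
  "polar F v0 (\<lambda>i. v i + Y * w i) v2 v3 = polar F v0 v v2 v3 + Y * polar F v0 w v2 v3"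
  "polar F v0 v1 (\<lambda>i. v i + Y * w i) v3 = polar F v0 v1 v v3 + Y * polar F v0 v1 w v3"
  "polar F v0 v1 v2 (\<lambda>i. v i + Y * w i) = polar F v0 v1 v2 v + Y * polar F v0 v1 v2 w"
  unfolding polar_def by (simp_all add: sum.distrib sum_distrib_left algebra_simps)

section \<open>The first concomitant on a line\<close>

lemma conc1_polar:
  "conc1 F x u = (\<Sum>c\<in>idx4. symb F c * x (c!0) * polar F x x (\<lambda>i. dU u i (c!1)) (\<lambda>i. dU u i (c!2))
                                * polar F x x x (\<lambda>i. dU u i (c!3)))"
proof -
  have "conc1 F x u = (\<Sum>c\<in>idx4. \<Sum>a\<in>idx4. \<Sum>b\<in>idx4. x (a!0) * x (a!1) * x (b!0) * x (b!1) * x (b!2)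
          * x (c!0) * dU u (a!2) (c!1) * dU u (a!3) (c!2) * dU u (b!3) (c!3)
          * symb F a * symb F b * symb F c)"
    unfolding conc1_def symb_eval_def by (rule sum_swap_out2)
  then show ?thesis
    unfolding polar_def by (simp add: sum_distrib_left sum_distrib_right mult_ac)
qed

definition cross :: "vec \<Rightarrow> vec \<Rightarrow> vec" where
  "cross p w = (\<lambda>m. if m = 0 then p 1 * w 2 - p 2 * w 1 else if m = 1 then p 2 * w 0 - p 0 * w 2
                    else p 0 * w 1 - p 1 * w 0)"

lemma dU_cross: "i < 3 \<Longrightarrow> k < 3 \<Longrightarrow> dU (cross p w) i k = w k * p i + (- p k) * w i"
  by (auto simp: dU_def cross_def eps_def sum_lessThan_3 algebra_simps numeral_3_eq_3 less_Suc_eq)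

lemma conc1_cross: "conc1 F x (cross p w) =
    polar F x x p p * polar F x x x p * polar F x w w w - polar F x x p p * polar F x x x w * polar F x w w p
  - polar F x x p w * polar F x x x p * polar F x w p w + polar F x x p w * polar F x x x w * polar F x w p p
  - polar F x x w p * polar F x x x p * polar F x p w w + polar F x x w p * polar F x x x w * polar F x p w p
  + polar F x x w w * polar F x x x p * polar F x p p w - polar F x x w w * polar F x x x w * polar F x p p p"
proof -
  let ?T = "\<lambda>y1 y2 y3 c. symb F c * x (c!0) * y1 (c!1) * y2 (c!2) * (y3 (c!3) :: complex)"
  define A1 A2 A3 A4 B1 B2 where "A1 = polar F x x p p" and "A2 = polar F x x p w"
    and "A3 = polar F x x w p" and "A4 = polar F x x w w" and "B1 = polar F x x x p" and "B2 = polar F x x x w"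
  have "symb F c * x (c!0) * polar F x x (\<lambda>i. dU (cross p w) i (c!1)) (\<lambda>i. dU (cross p w) i (c!2))
          * polar F x x x (\<lambda>i. dU (cross p w) i (c!3))
     = A1 * B1 * ?T w w w c - A1 * B2 * ?T w w p c - A2 * B1 * ?T w p w c + A2 * B2 * ?T w p p c
     - A3 * B1 * ?T p w w c + A3 * B2 * ?T p w p c + A4 * B1 * ?T p p w c - A4 * B2 * ?T p p p c"
    if c: "c \<in> idx4" for c
  proof -
    have e: "polar F x x (\<lambda>i. dU (cross p w) i (c!1)) (\<lambda>i. dU (cross p w) i (c!2))
        = polar F x x (\<lambda>i. w (c!1) * p i + (- p (c!1)) * w i) (\<lambda>i. w (c!2) * p i + (- p (c!2)) * w i)"
      "polar F x x x (\<lambda>i. dU (cross p w) i (c!3))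
        = polar F x x x (\<lambda>i. w (c!3) * p i + (- p (c!3)) * w i)"
      by (rule polar_cong; simp add: dU_cross idx4_nth_less[OF c])+
    show ?thesis
      unfolding e polar_linear2 polar_linear3 A1_def A2_def A3_def A4_def B1_def B2_def
      by (simp add: algebra_simps)
  qed
  then have "conc1 F x (cross p w) = (\<Sum>c\<in>idx4. A1 * B1 * ?T w w w c - A1 * B2 * ?T w w p c
     - A2 * B1 * ?T w p w c + A2 * B2 * ?T w p p c - A3 * B1 * ?T p w w c + A3 * B2 * ?T p w p c
     + A4 * B1 * ?T p p w c - A4 * B2 * ?T p p p c)"
    unfolding conc1_polar by (rule sum.cong[OF refl])
  then show ?thesis
    unfolding A1_def A2_def A3_def A4_def B1_def B2_def polar_def
    by (simp add: sum.distrib sum_subtractf sum_distrib_left)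
qed

definition binary_coeff :: "quartic \<Rightarrow> vec \<Rightarrow> vec \<Rightarrow> nat \<Rightarrow> complex" where
  "binary_coeff F p w k = (if k = 0 then polar F p p p p else if k = 1 then polar F p p p w
     else if k = 2 then polar F p p w w else if k = 3 then polar F p w w w else polar F w w w w)"

text \<open>The coefficients of the sextic covariant T of the binary quartic with polarized
  coefficients binary_coeff.\<close>

definition sextic_coeff :: "quartic \<Rightarrow> vec \<Rightarrow> vec \<Rightarrow> nat \<Rightarrow> complex" where
  "sextic_coeff F p w k = (let a = binary_coeff F p w in
     if k = 0 then 2 * a 1^3 - 3 * a 0 * a 1 * a 2 + a 0^2 * a 3
     else if k = 1 then 6 * a 1^2 * a 2 - 9 * a 0 * a 2^2 + 2 * a 0 * a 1 * a 3 + a 0^2 * a 4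
     else if k = 2 then 10 * a 1^2 * a 3 - 15 * a 0 * a 2 * a 3 + 5 * a 0 * a 1 * a 4
     else if k = 3 then 10 * a 1^2 * a 4 - 10 * a 0 * a 3^2
     else if k = 4 then -10 * a 1 * a 3^2 + 15 * a 1 * a 2 * a 4 - 5 * a 0 * a 3 * a 4
     else if k = 5 then -6 * a 2 * a 3^2 + 9 * a 2^2 * a 4 - 2 * a 1 * a 3 * a 4 - a 0 * a 4^2
     else -2 * a 3^3 + 3 * a 2 * a 3 * a 4 - a 1 * a 4^2)"

lemma conc1_line: "conc1 F (\<lambda>i. p i + Y * w i) (cross p w) = (\<Sum>k\<le>6. sextic_coeff F p w k * Y^k)"
  unfolding conc1_cross polar_add_scaled
  by (simp add: polar_swap01[of F w p] polar_swap12[of F _ w p] polar_swap23[of F _ _ w p]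
      sextic_coeff_def binary_coeff_def Let_def numeral_eq_Suc atMost_Suc algebra_simps)

lemma conc1_zero_imp_polar_square:
  assumes "\<forall>x u. conc1 F x u = 0"
  shows "polar F p p p p ^ 3 * polar F w w w w
           = (3 * polar F p p p p * polar F p p w w - 2 * polar F p p p w ^ 2)^2"
proof -
  have "(\<Sum>k\<le>6. sextic_coeff F p w k * Y^k) = 0" for Y
    using assms conc1_line[of F p Y w] by simp
  then have "sextic_coeff F p w 0 = 0" "sextic_coeff F p w 1 = 0"
    using zero_polynom_imp_zero_coeffs[of "sextic_coeff F p w" 6] by auto
  moreover have "polar F p p p p ^ 3 * polar F w w w w
      - (3 * polar F p p p p * polar F p p w w - 2 * polar F p p p w ^ 2)^2
     = polar F p p p p * sextic_coeff F p w 1 - 2 * polar F p p p w * sextic_coeff F p w 0"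
    by (simp add: sextic_coeff_def binary_coeff_def algebra_simps power2_eq_square power3_eq_cube)
  ultimately show ?thesis
    by simp
qed

section \<open>The Hessian and singular quadratic forms\<close>

text \<open>The Hessian matrix of F at x, divided by 12.\<close>

definition polar_matrix :: "quartic \<Rightarrow> vec \<Rightarrow> mat3" where
  "polar_matrix F x i j = (\<Sum>a<3. \<Sum>b<3. symb F [a,b,i,j] * x a * x b)"

lemma polar_matrix_sym: "polar_matrix F x i j = polar_matrix F x j i"
  unfolding polar_matrix_def by (intro sum.cong refl) (simp add: symb_swap23[of F _ _ i j])

lemma sum_idx4_polar_matrix:
  "(\<Sum>a\<in>idx4. symb F a * x (a!0) * x (a!1) * f (a!2) (a!3)) = (\<Sum>k<3. \<Sum>l<3. polar_matrix F x k l * f k l)"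
  unfolding sum_idx4 polar_matrix_def by (simp add: sum_lessThan_3 algebra_simps)

lemma polar_polar_matrix: "polar F x x v w = (\<Sum>k<3. \<Sum>l<3. polar_matrix F x k l * v k * w l)"
  unfolding polar_def using sum_idx4_polar_matrix[of F x "\<lambda>k l. v k * w l"] by (simp add: mult.assoc)

definition det3 :: "mat3 \<Rightarrow> complex" where
  "det3 A = A 0 0 * A 1 1 * A 2 2 - A 0 0 * A 1 2 * A 2 1 - A 0 1 * A 1 0 * A 2 2
          + A 0 1 * A 1 2 * A 2 0 + A 0 2 * A 1 0 * A 2 1 - A 0 2 * A 1 1 * A 2 0"

lemma conc2_det: "conc2 F x u = 6 * det3 (polar_matrix F x)"
proof -
  let ?S = "\<lambda>a. symb F a * x (a!0) * x (a!1)"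
  have "conc2 F x u = (\<Sum>a\<in>idx4. ?S a * (\<Sum>b\<in>idx4. ?S b * (\<Sum>c\<in>idx4. ?S c
      * (eps (a!2) (b!2) (c!2) * eps (a!3) (b!3) (c!3)))))"
    unfolding conc2_def symb_eval_def by (simp add: sum_distrib_left mult_ac)
  also have "\<dots> = (\<Sum>a\<in>idx4. ?S a * (\<Sum>b\<in>idx4. ?S b * (\<Sum>m<3. \<Sum>n<3. polar_matrix F x m n
      * (eps (a!2) (b!2) m * eps (a!3) (b!3) n))))"
    by (simp only: sum_idx4_polar_matrix[of F x "\<lambda>m n. eps (a!2) (b!2) m * eps (a!3) (b!3) n" for a b])
  also have "\<dots> = (\<Sum>a\<in>idx4. ?S a * (\<Sum>k<3. \<Sum>l<3. polar_matrix F x k l * (\<Sum>m<3. \<Sum>n<3.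
      polar_matrix F x m n * (eps (a!2) k m * eps (a!3) l n))))"
    by (simp only: sum_idx4_polar_matrix[of F x
          "\<lambda>k l. \<Sum>m<3. \<Sum>n<3. polar_matrix F x m n * (eps (a!2) k m * eps (a!3) l n)" for a])
  also have "\<dots> = (\<Sum>i<3. \<Sum>j<3. polar_matrix F x i j * (\<Sum>k<3. \<Sum>l<3. polar_matrix F x k l * (\<Sum>m<3. \<Sum>n<3.
      polar_matrix F x m n * (eps i k m * eps j l n))))"
    by (rule sum_idx4_polar_matrix[of F x "\<lambda>i j. \<Sum>k<3. \<Sum>l<3. polar_matrix F x k l * (\<Sum>m<3. \<Sum>n<3.
          polar_matrix F x m n * (eps i k m * eps j l n))"])
  also have "\<dots> = 6 * det3 (polar_matrix F x)"
    by (simp add: sum_lessThan_3 eps_def det3_def algebra_simps)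
  finally show ?thesis .
qed

definition adj3 :: "mat3 \<Rightarrow> mat3" where
  "adj3 A i j = A ((j + 1) mod 3) ((i + 1) mod 3) * A ((j + 2) mod 3) ((i + 2) mod 3)
              - A ((j + 1) mod 3) ((i + 2) mod 3) * A ((j + 2) mod 3) ((i + 1) mod 3)"

lemma det3_rank_one_update:
  "det3 (\<lambda>i j. \<alpha> * A i j + \<beta> * m i * m j)
     = \<alpha>^3 * det3 A + \<alpha>^2 * \<beta> * (\<Sum>i<3. \<Sum>j<3. m i * adj3 A i j * m j)"
  unfolding det3_def adj3_def
  by (simp add: sum_lessThan_3 numeral_2_eq_2 algebra_simps power2_eq_square power3_eq_cube)

lemma adj3_quadratic_form:
  assumes "\<And>l. m l = (\<Sum>k<3. A k l * p k)"
  shows "(\<Sum>i<3. \<Sum>j<3. m i * adj3 A i j * m j) = (\<Sum>l<3. m l * p l) * det3 A"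
  unfolding det3_def adj3_def by (simp add: assms sum_lessThan_3 numeral_2_eq_2 algebra_simps)

lemma binary_quadratic_square:
  fixes r11 r12 r22 :: complex
  assumes "r11 * r22 = r12^2"
  shows "\<exists>t1 t2. \<forall>Y Z. r11*Y^2 + 2*r12*Y*Z + r22*Z^2 = (t1*Y + t2*Z)^2"
proof (cases "r11 = 0")
  case True
  then have "r12 = 0" using assms by simp
  with True show ?thesis
    by (intro exI[of _ 0] exI[of _ "csqrt r22"]) (simp add: power_mult_distrib)
next
  case False
  define s where "s = csqrt (1 / r11)"
  have "r11*Y^2 + 2*r12*Y*Z + r22*Z^2 = (s*r11*Y + s*r12*Z)^2" for Y Z
  proof -
    have "(s*r11*Y + s*r12*Z)^2 = s^2 * (r11*Y + r12*Z)^2" by (simp add: algebra_simps power2_eq_square)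
    also have "\<dots> = (r11*Y + r12*Z)^2 / r11" by (simp add: s_def)
    also have "\<dots> = r11*Y^2 + 2*r12*Y*Z + r22*Z^2"
      using assms False by (simp add: field_simps power2_eq_square)
    finally show ?thesis ..
  qed
  then show ?thesis by blast
qed

lemma singular_quadratic_factor_pivot:
  fixes a b c d e f :: complex
  assumes a: "a \<noteq> 0" and det: "a*b*c + 2*d*e*f - a*f^2 - b*e^2 - c*d^2 = 0"
  shows "\<exists>l1 l2 l3 m1 m2 m3. \<forall>X Y Z. a*X^2 + b*Y^2 + c*Z^2 + 2*d*X*Y + 2*e*X*Z + 2*f*Y*Z
      = (l1*X + l2*Y + l3*Z) * (m1*X + m2*Y + m3*Z)"
proof -
  have "(d^2 - a*b) * (e^2 - a*c) - (d*e - a*f)^2 = a * (a*b*c + 2*d*e*f - a*f^2 - b*e^2 - c*d^2)"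
    by (simp add: algebra_simps power2_eq_square)
  then have "(d^2 - a*b) * (e^2 - a*c) = (d*e - a*f)^2"
    using det by simp
  then obtain t1 t2
    where t: "\<And>Y Z. (d^2 - a*b)*Y^2 + 2*(d*e - a*f)*Y*Z + (e^2 - a*c)*Z^2 = (t1*Y + t2*Z)^2"
    using binary_quadratic_square by blast
  have "a*X^2 + b*Y^2 + c*Z^2 + 2*d*X*Y + 2*e*X*Z + 2*f*Y*Z
      = (1*X + ((d - t1)/a)*Y + ((e - t2)/a)*Z) * (a*X + (d + t1)*Y + (e + t2)*Z)" for X Y Z
  proof -
    have "a * (a*X^2 + b*Y^2 + c*Z^2 + 2*d*X*Y + 2*e*X*Z + 2*f*Y*Z)
        = (a*X + d*Y + e*Z)^2 - ((d^2 - a*b)*Y^2 + 2*(d*e - a*f)*Y*Z + (e^2 - a*c)*Z^2)"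
      by (simp add: algebra_simps power2_eq_square)
    also have "\<dots> = (a*X + d*Y + e*Z)^2 - (t1*Y + t2*Z)^2"
      by (simp only: t)
    also have "\<dots> = a * ((X + ((d - t1)/a)*Y + ((e - t2)/a)*Z) * (a*X + (d + t1)*Y + (e + t2)*Z))"
      using a by (simp add: field_simps power2_eq_square)
    finally show ?thesis
      using a by simp
  qed
  then show ?thesis by blast
qed

lemma off_diagonal_quadratic_factor:
  fixes d e f :: complex
  assumes "d * e * f = 0"
  shows "\<exists>l1 l2 l3 m1 m2 m3. \<forall>X Y Z. 2*d*X*Y + 2*e*X*Z + 2*f*Y*Z
      = (l1*X + l2*Y + l3*Z) * (m1*X + m2*Y + m3*Z)"
proof -
  consider "d = 0" | "e = 0" | "f = 0"
    using assms by auto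
  then show ?thesis
  proof cases
    case 1
    then have "2*d*X*Y + 2*e*X*Z + 2*f*Y*Z = (0*X + 0*Y + 1*Z) * (2*e*X + 2*f*Y + 0*Z)" for X Y Z
      by (simp add: algebra_simps)
    then show ?thesis by blast
  next
    case 2
    then have "2*d*X*Y + 2*e*X*Z + 2*f*Y*Z = (0*X + 1*Y + 0*Z) * (2*d*X + 0*Y + 2*f*Z)" for X Y Z
      by (simp add: algebra_simps)
    then show ?thesis by blast
  next
    case 3
    then have "2*d*X*Y + 2*e*X*Z + 2*f*Y*Z = (1*X + 0*Y + 0*Z) * (0*X + 2*d*Y + 2*e*Z)" for X Y Z
      by (simp add: algebra_simps)
    then show ?thesis by blast
  qed
qed

lemma singular_ternary_quadratic_factor:
  fixes a b c d e f :: complex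
  assumes det: "a*b*c + 2*d*e*f - a*f^2 - b*e^2 - c*d^2 = 0"
  shows "\<exists>l1 l2 l3 m1 m2 m3. \<forall>X Y Z. a*X^2 + b*Y^2 + c*Z^2 + 2*d*X*Y + 2*e*X*Z + 2*f*Y*Z
      = (l1*X + l2*Y + l3*Z) * (m1*X + m2*Y + m3*Z)"
proof -
  consider "a \<noteq> 0" | "b \<noteq> 0" | "c \<noteq> 0" | "a = 0" "b = 0" "c = 0"
    by blast
  then show ?thesis
  proof cases
    case 1
    then show ?thesis
      using singular_quadratic_factor_pivot det by blast
  next
    case 2
    have "b*a*c + 2*d*f*e - b*e^2 - a*f^2 - c*d^2 = 0"
      using det by (simp add: algebra_simps)
    then obtain l1 l2 l3 m1 m2 m3 where h: "\<And>X Y Z. b*X^2 + a*Y^2 + c*Z^2 + 2*d*X*Y + 2*f*X*Z + 2*e*Y*Z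
        = (l1*X + l2*Y + l3*Z) * (m1*X + m2*Y + m3*Z)"
      using singular_quadratic_factor_pivot[OF 2] by blast
    have "a*X^2 + b*Y^2 + c*Z^2 + 2*d*X*Y + 2*e*X*Z + 2*f*Y*Z
        = (l2*X + l1*Y + l3*Z) * (m2*X + m1*Y + m3*Z)" for X Y Z
      using h[of Y X Z] by (simp add: algebra_simps)
    then show ?thesis by blast
  next
    case 3
    have "c*a*b + 2*e*f*d - c*d^2 - a*f^2 - b*e^2 = 0"
      using det by (simp add: algebra_simps)
    then obtain l1 l2 l3 m1 m2 m3 where h: "\<And>X Y Z. c*X^2 + a*Y^2 + b*Z^2 + 2*e*X*Y + 2*f*X*Z + 2*d*Y*Z
        = (l1*X + l2*Y + l3*Z) * (m1*X + m2*Y + m3*Z)"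
      using singular_quadratic_factor_pivot[OF 3] by blast
    have "a*X^2 + b*Y^2 + c*Z^2 + 2*d*X*Y + 2*e*X*Z + 2*f*Y*Z
        = (l2*X + l3*Y + l1*Z) * (m2*X + m3*Y + m1*Z)" for X Y Z
      using h[of Z X Y] by (simp add: algebra_simps)
    then show ?thesis by blast
  next
    case 4
    with det have "d * e * f = 0"
      by simp
    with 4 show ?thesis
      using off_diagonal_quadratic_factor by simp
  qed
qed

definition vec3 :: "complex \<Rightarrow> complex \<Rightarrow> complex \<Rightarrow> vec" where
  "vec3 x y z = (\<lambda>i. if i = 0 then x else if i = 1 then y else z)"

lemma lin_vec3: "lin (vec3 x y z) w = x * w 0 + y * w 1 + z * w 2"
  unfolding lin_def vec3_def by (simp add: sum_lessThan_3)

lemma singular_quadratic_form_factor: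
  assumes sym: "\<And>i j. K i j = K j i" and det: "det3 K = 0"
  shows "\<exists>L1 L2. \<forall>w. (\<Sum>k<3. \<Sum>l<3. K k l * w k * w l) = lin L1 w * lin L2 w"
proof -
  define a b c d e f where "a = K 0 0" and "b = K 1 1" and "c = K 2 2"
    and "d = K 0 1" and "e = K 0 2" and "f = K 1 2"
  have q: "(\<Sum>k<3. \<Sum>l<3. K k l * w k * w l)
      = a*(w 0)^2 + b*(w 1)^2 + c*(w 2)^2 + 2*d*(w 0)*(w 1) + 2*e*(w 0)*(w 2) + 2*f*(w 1)*(w 2)" for w
    unfolding a_def b_def c_def d_def e_def f_def using sym[of 1 0] sym[of 2 0] sym[of 2 1]
    by (simp add: sum_lessThan_3 algebra_simps power2_eq_square)
  have coeffs: "a*b*c + 2*d*e*f - a*f^2 - b*e^2 - c*d^2 = 0"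
    using det sym[of 1 0] sym[of 2 0] sym[of 2 1]
    unfolding det3_def a_def b_def c_def d_def e_def f_def by (simp add: algebra_simps power2_eq_square)
  obtain l1 l2 l3 m1 m2 m3 where "\<And>X Y Z. a*X^2 + b*Y^2 + c*Z^2 + 2*d*X*Y + 2*e*X*Z + 2*f*Y*Z
      = (l1*X + l2*Y + l3*Z) * (m1*X + m2*Y + m3*Z)"
    using singular_ternary_quadratic_factor[OF coeffs] by blast
  then have "(\<Sum>k<3. \<Sum>l<3. K k l * w k * w l) = lin (vec3 l1 l2 l3) w * lin (vec3 m1 m2 m3) w" for w
    by (simp add: q lin_vec3)
  then show ?thesis by blast
qed

section \<open>Quartics annihilated by the first two concomitants\<close>

definition polar_gradient :: "quartic \<Rightarrow> vec \<Rightarrow> vec" where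
  "polar_gradient F p l = (\<Sum>k<3. polar_matrix F p k l * p k)"

definition root_form_matrix :: "quartic \<Rightarrow> vec \<Rightarrow> mat3" where
  "root_form_matrix F p i j =
     3 * polar F p p p p * polar_matrix F p i j - 2 * polar_gradient F p i * polar_gradient F p j"

lemma root_form_matrix_sym: "root_form_matrix F p i j = root_form_matrix F p j i"
  unfolding root_form_matrix_def using polar_matrix_sym[of F p i j] by (simp add: mult.commute)

lemma root_form_matrix_quadratic_form:
  "3 * polar F p p p p * polar F p p w w - 2 * polar F p p p w ^ 2
     = (\<Sum>k<3. \<Sum>l<3. root_form_matrix F p k l * w k * w l)"
  unfolding root_form_matrix_def polar_gradient_def polar_polar_matrix
  by (simp add: sum_lessThan_3 algebra_simps power2_eq_square)

lemma det3_root_form_matrix: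
  assumes "det3 (polar_matrix F p) = 0"
  shows "det3 (root_form_matrix F p) = 0"
proof -
  let ?c = "3 * polar F p p p p" and ?A = "polar_matrix F p" and ?m = "polar_gradient F p"
  have "det3 (root_form_matrix F p) = det3 (\<lambda>i j. ?c * ?A i j + (-2) * ?m i * ?m j)"
    unfolding root_form_matrix_def by (rule arg_cong[where f = det3]) (simp add: fun_eq_iff)
  also have "\<dots> = ?c^3 * det3 ?A + ?c^2 * (-2) * (\<Sum>i<3. \<Sum>j<3. ?m i * adj3 ?A i j * ?m j)"
    by (rule det3_rank_one_update)
  also have "\<dots> = 0"
    using assms by (simp add: adj3_quadratic_form[OF polar_gradient_def])
  finally show ?thesis .
qed

lemma lin_divide: "lin (\<lambda>i. L i / s) x = lin L x / s"
  unfolding lin_def by (simp add: sum_divide_distrib)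

lemma conc1_conc2_zero_imp_double_lines:
  assumes c1: "\<forall>x u. conc1 F x u = 0" and c2: "\<forall>x u. conc2 F x u = 0"
  shows "\<exists>L1 L2. \<forall>x. quartic_eval F x = (lin L1 x * lin L2 x)^2"
proof (cases "\<forall>x. quartic_eval F x = 0")
  case True
  then show ?thesis
    by (intro exI[of _ "\<lambda>_. 0"]) (simp add: lin_def)
next
  case False
  then obtain p where "quartic_eval F p \<noteq> 0" by blast
  define c where "c = polar F p p p p"
  have "c \<noteq> 0"
    using \<open>quartic_eval F p \<noteq> 0\<close> by (simp add: c_def quartic_eval_polar)
  have "det3 (polar_matrix F p) = 0"
    using c2 conc2_det[of F p] by simp
  then obtain L1 L2
    where L: "\<And>w. (\<Sum>k<3. \<Sum>l<3. root_form_matrix F p k l * w k * w l) = lin L1 w * lin L2 w"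
    using singular_quadratic_form_factor[OF root_form_matrix_sym det3_root_form_matrix] by blast
  have cube: "c^3 * quartic_eval F w = (lin L1 w * lin L2 w)^2" for w
    using conc1_zero_imp_polar_square[OF c1, of p w] unfolding quartic_eval_polar c_def
    by (simp add: root_form_matrix_quadratic_form L)
  define s where "s = csqrt c"
  have "s^2 = c"
    by (simp add: s_def)
  then have "c^3 = (s^3)^2" "s \<noteq> 0"
    using \<open>c \<noteq> 0\<close> by (metis power_mult mult.commute, auto)
  show ?thesis
  proof (intro exI allI)
    fix x
    show "quartic_eval F x = (lin (\<lambda>i. L1 i / s^3) x * lin L2 x)^2"
      using cube[of x] \<open>c \<noteq> 0\<close> \<open>s \<noteq> 0\<close> unfolding lin_divide \<open>c^3 = (s^3)^2\<close>
      by (simp add: field_simps power2_eq_square)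
  qed
qed

section \<open>Symbolic evaluation on decomposable symbols\<close>

definition rank_one :: "(nat \<Rightarrow> vec) \<Rightarrow> nat list \<Rightarrow> complex" where
  "rank_one V a = (\<Prod>m<4. V m (a!m))"

lemma rank_one_bij:
  assumes "bij_betw \<sigma> {..<4} {..<4::nat}"
  shows "rank_one V a = (\<Prod>m<4. V (\<sigma> m) (a ! \<sigma> m))"
  unfolding rank_one_def using prod.reindex_bij_betw[OF assms, of "\<lambda>n. V n (a ! n)"] by simp

lemma sum_slots_rank_one:
  assumes \<sigma>: "bij_betw \<sigma> {..<4} {..<4::nat}" and \<tau>: "bij_betw \<tau> {..<4} {..<4::nat}"
  shows "(\<Sum>a\<in>idx4. \<Sum>b\<in>idx4. \<Sum>c\<in>idx4.
            (\<Prod>m<4. g m (a!m) (b ! \<sigma> m) (c ! \<tau> m)) * rank_one V a * rank_one W b * rank_one Z c)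
       = (\<Prod>m<4. \<Sum>i<3. \<Sum>j<3. \<Sum>k<3. g m i j k * V m i * W (\<sigma> m) j * Z (\<tau> m) k)"
    (is "?lhs = ?rhs")
proof -
  have "(\<Prod>m<4. g m (a!m) (b ! \<sigma> m) (c ! \<tau> m)) * rank_one V a * rank_one W b * rank_one Z c
      = (\<Prod>m<4. g m (a!m) (b ! \<sigma> m) (c ! \<tau> m) * V m (a!m) * W (\<sigma> m) (b ! \<sigma> m) * Z (\<tau> m) (c ! \<tau> m))"
    for a b c
    unfolding rank_one_bij[OF \<sigma>, of W] rank_one_bij[OF \<tau>, of Z] prod.distrib
    by (simp add: rank_one_def)
  then have "?lhs = (\<Sum>a\<in>idx4. \<Sum>b\<in>idx4. \<Sum>c\<in>idx4.
      \<Prod>m<4. g m (a!m) (b ! \<sigma> m) (c ! \<tau> m) * V m (a!m) * W (\<sigma> m) (b ! \<sigma> m) * Z (\<tau> m) (c ! \<tau> m))"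
    by simp
  also have "\<dots> = (\<Sum>a\<in>idx4. \<Sum>b\<in>idx4.
      \<Prod>m<4. \<Sum>k<3. g m (a!m) (b ! \<sigma> m) k * V m (a!m) * W (\<sigma> m) (b ! \<sigma> m) * Z (\<tau> m) k)"
    by (intro sum.cong refl sum_idx4_prod_bij[OF \<tau>,
          of "\<lambda>m k. g m (a!m) (b ! \<sigma> m) k * V m (a!m) * W (\<sigma> m) (b ! \<sigma> m) * Z (\<tau> m) k" for a b])
  also have "\<dots> = (\<Sum>a\<in>idx4.
      \<Prod>m<4. \<Sum>j<3. \<Sum>k<3. g m (a!m) j k * V m (a!m) * W (\<sigma> m) j * Z (\<tau> m) k)"
    by (intro sum.cong refl sum_idx4_prod_bij[OF \<sigma>,
          of "\<lambda>m j. \<Sum>k<3. g m (a!m) j k * V m (a!m) * W (\<sigma> m) j * Z (\<tau> m) k" for a])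
  also have "\<dots> = ?rhs"
    by (rule sum_idx4_prod[of "\<lambda>m i. \<Sum>j<3. \<Sum>k<3. g m i j k * V m i * W (\<sigma> m) j * Z (\<tau> m) k"])
  finally show ?thesis .
qed

definition bracket :: "vec \<Rightarrow> vec \<Rightarrow> vec \<Rightarrow> complex" where
  "bracket v w z = (\<Sum>i<3. \<Sum>j<3. \<Sum>k<3. eps i j k * v i * w j * z k)"

lemma bracket_repeat: "bracket v v z = 0" "bracket v z v = 0" "bracket z v v = 0"
  unfolding bracket_def by (simp_all add: sum_lessThan_3 eps_def algebra_simps)

lemma bracket_swap: "bracket w v z = - bracket v w z"
  unfolding bracket_def by (simp add: sum_lessThan_3 eps_def algebra_simps)

lemma bracket_two_vectors:
  assumes "v \<in> {p, q}" "w \<in> {p, q}" "z \<in> {p, q}"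
  shows "bracket v w z = 0"
  using assms bracket_repeat by auto

lemma symb_eval_sum_rank_one:
  assumes "\<And>a. a \<in> idx4 \<Longrightarrow> symb F a = \<kappa> * (\<Sum>r\<in>I. rank_one (V r) a)"
  shows "symb_eval F P = \<kappa>^3 * (\<Sum>r\<in>I. \<Sum>s\<in>I. \<Sum>t\<in>I. \<Sum>a\<in>idx4. \<Sum>b\<in>idx4. \<Sum>c\<in>idx4.
           P a b c * rank_one (V r) a * rank_one (V s) b * rank_one (V t) c)"
proof -
  have "P a b c * symb F a * symb F b * symb F c = \<kappa>^3 * (\<Sum>r\<in>I. \<Sum>s\<in>I. \<Sum>t\<in>I.
          P a b c * rank_one (V r) a * rank_one (V s) b * rank_one (V t) c)"
    if "a \<in> idx4" "b \<in> idx4" "c \<in> idx4" for a b c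
    by (simp add: assms that sum_distrib_left sum_distrib_right power3_eq_cube mult_ac)
  then have "symb_eval F P = \<kappa>^3 * (\<Sum>a\<in>idx4. \<Sum>b\<in>idx4. \<Sum>c\<in>idx4. \<Sum>r\<in>I. \<Sum>s\<in>I. \<Sum>t\<in>I.
          P a b c * rank_one (V r) a * rank_one (V s) b * rank_one (V t) c)"
    unfolding symb_eval_def by (simp add: sum_distrib_left)
  also have "(\<Sum>a\<in>idx4. \<Sum>b\<in>idx4. \<Sum>c\<in>idx4. \<Sum>r\<in>I. \<Sum>s\<in>I. \<Sum>t\<in>I.
          P a b c * rank_one (V r) a * rank_one (V s) b * rank_one (V t) c)
      = (\<Sum>r\<in>I. \<Sum>s\<in>I. \<Sum>t\<in>I. \<Sum>a\<in>idx4. \<Sum>b\<in>idx4. \<Sum>c\<in>idx4.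
          P a b c * rank_one (V r) a * rank_one (V s) b * rank_one (V t) c)"
    by (subst sum_swap_out3, rule sum.cong[OF refl], subst sum_swap_out3, rule sum.cong[OF refl],
        rule sum_swap_out3)
  finally show ?thesis .
qed

lemma symb_eval_slots_rank_one:
  assumes "\<And>a. a \<in> idx4 \<Longrightarrow> symb F a = \<kappa> * (\<Sum>r\<in>I. rank_one (V r) a)"
    and \<sigma>: "bij_betw \<sigma> {..<4} {..<4}" and \<tau>: "bij_betw \<tau> {..<4} {..<4}"
  shows "symb_eval F (\<lambda>a b c. \<Prod>m<4. g m (a!m) (b ! \<sigma> m) (c ! \<tau> m))
    = \<kappa>^3 * (\<Sum>r\<in>I. \<Sum>s\<in>I. \<Sum>t\<in>I. \<Prod>m<4. \<Sum>i<3. \<Sum>j<3. \<Sum>k<3.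
         g m i j k * V r m i * V s (\<sigma> m) j * V t (\<tau> m) k)"
  by (simp only: symb_eval_sum_rank_one[OF assms(1)] sum_slots_rank_one[OF \<sigma> \<tau>])

lemma symb_eval_slots_vanish:
  assumes "\<And>a. a \<in> idx4 \<Longrightarrow> symb F a = \<kappa> * (\<Sum>r\<in>I. rank_one (V r) a)"
    and "\<And>r m. r \<in> I \<Longrightarrow> m < 4 \<Longrightarrow> V r m \<in> {p, q}"
    and \<sigma>: "bij_betw \<sigma> {..<4} {..<4}" and \<tau>: "bij_betw \<tau> {..<4} {..<4}"
    and "m\<^sub>0 < 4" and "g m\<^sub>0 = eps"
  shows "symb_eval F (\<lambda>a b c. \<Prod>m<4. g m (a!m) (b ! \<sigma> m) (c ! \<tau> m)) = 0"
proof -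
  have "(\<Prod>m<4. \<Sum>i<3. \<Sum>j<3. \<Sum>k<3. g m i j k * V r m i * V s (\<sigma> m) j * V t (\<tau> m) k) = 0"
    if "r \<in> I" "s \<in> I" "t \<in> I" for r s t
  proof (rule prod_zero)
    have "\<sigma> m\<^sub>0 < 4" "\<tau> m\<^sub>0 < 4"
      using \<open>m\<^sub>0 < 4\<close> bij_betwE[OF \<sigma>] bij_betwE[OF \<tau>] by auto
    then have "bracket (V r m\<^sub>0) (V s (\<sigma> m\<^sub>0)) (V t (\<tau> m\<^sub>0)) = 0"
      using assms(2,5) that by (intro bracket_two_vectors[of _ p q]) auto
    then show "\<exists>m\<in>{..<4}. (\<Sum>i<3. \<Sum>j<3. \<Sum>k<3. g m i j k * V r m i * V s (\<sigma> m) j * V t (\<tau> m) k) = 0"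
      using assms(5,6) by (intro bexI[of _ m\<^sub>0]) (auto simp: bracket_def)
  qed (simp)
  then show ?thesis
    by (simp add: symb_eval_slots_rank_one[OF assms(1) \<sigma> \<tau>] del: prod_zero_iff)
qed

section \<open>Pairs of double lines\<close>

lemma quartic_eval_zero_coeffs:
  assumes "\<forall>x. quartic_eval D x = 0" and "a + b \<le> 4"
  shows "D a b (4 - a - b) = 0"
proof -
  define C where "C y z a = (\<Sum>b\<le>4 - a. D a b (4 - a - b) * y ^ b * z ^ (4 - a - b))" for y z a
  have "quartic_eval D (\<lambda>i. if i = 0 then t else if i = 1 then y else z) = (\<Sum>a\<le>4. C y z a * t ^ a)"
    for t y z
    unfolding quartic_eval_def C_def by (simp add: sum_distrib_left mult_ac)
  then have "C y z a = 0" if "a \<le> 4" for y z a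
    using zero_polynom_imp_zero_coeffs[of "C y z" 4 a] assms(1) that by metis
  then have "(\<Sum>b\<le>4 - a. D a b (4 - a - b) * y ^ b) = 0" for y
    using \<open>\<And>y z a. a \<le> 4 \<Longrightarrow> C y z a = 0\<close>[of a y 1] assms(2) unfolding C_def by simp
  then show ?thesis
    using zero_polynom_imp_zero_coeffs[of "\<lambda>b. D a b (4 - a - b)" "4 - a" b] assms(2) by simp
qed

lemma quartic_coeffs_unique:
  assumes "\<forall>x. quartic_eval F x = quartic_eval G x" and "a + b \<le> 4"
  shows "F a b (4 - a - b) = G a b (4 - a - b)"
proof -
  have "quartic_eval (\<lambda>a b c. F a b c - G a b c) x = quartic_eval F x - quartic_eval G x" for x
    unfolding quartic_eval_def by (simp add: sum_subtractf algebra_simps)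
  then show ?thesis
    using quartic_eval_zero_coeffs[of "\<lambda>a b c. F a b c - G a b c"] assms by simp
qed

lemma symb_cong_quartic_eval:
  assumes "\<forall>x. quartic_eval F x = quartic_eval G x" and "a \<in> idx4"
  shows "symb F a = symb G a"
proof -
  have "count_list a 0 + count_list a 1 + count_list a 2 = 4"
    using assms(2) count_list_012[of a] by (auto simp: idx4_def lessThan_atLeast0)
  then have "count_list a 0 + count_list a 1 \<le> 4" "count_list a 2 = 4 - count_list a 0 - count_list a 1"
    by arith+
  then show ?thesis
    using quartic_coeffs_unique[OF assms(1), of "count_list a 0" "count_list a 1"]
    by (simp add: symb_def)
qed

definition sort_index :: "nat list \<Rightarrow> nat list" where
  "sort_index a =
     replicate (count_list a 0) 0 @ replicate (count_list a 1) 1 @ replicate (count_list a 2) 2"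

text \<open>For a symmetric tensor T, the coefficients of the quartic whose symbol is T.\<close>

definition symbol_coeffs :: "(nat list \<Rightarrow> complex) \<Rightarrow> quartic" where
  "symbol_coeffs T a b c =
     T (replicate a 0 @ replicate b 1 @ replicate c 2) * fact 4 / (fact a * fact b * fact c)"

lemma symb_symbol_coeffs: "symb (symbol_coeffs T) a = T (sort_index a)"
  unfolding symb_def symbol_coeffs_def sort_index_def by simp

definition arrangement :: "vec \<Rightarrow> vec \<Rightarrow> nat \<Rightarrow> nat \<Rightarrow> vec" where
  "arrangement L1 L2 r m =
     (if [[0,0,1,1],[0,1,0,1],[0,1,1,0],[1,0,0,1],[1,0,1,0],[1,1,0,0::nat]] ! r ! m = 0 then L1 else L2)"

definition double_lines_symbol :: "vec \<Rightarrow> vec \<Rightarrow> nat list \<Rightarrow> complex" where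
  "double_lines_symbol L1 L2 a = (\<Sum>r<6. rank_one (arrangement L1 L2 r) a) / 6"

lemma double_lines_symbol_sort_index:
  "a \<in> idx4 \<Longrightarrow> double_lines_symbol L1 L2 (sort_index a) = double_lines_symbol L1 L2 a"
  using ball_idx4[of "\<lambda>a. double_lines_symbol L1 L2 (sort_index a) = double_lines_symbol L1 L2 a"]
  unfolding all_less_3
  by (simp add: sort_index_def double_lines_symbol_def sum_lessThan_6 rank_one_def prod_lessThan_4
      arrangement_def mult_ac)

lemma quartic_eval_double_lines_symbol:
  "quartic_eval (symbol_coeffs (double_lines_symbol L1 L2)) x = (lin L1 x * lin L2 x)^2"
  unfolding quartic_eval_def symbol_coeffs_def double_lines_symbol_def
  by (simp add: numeral_eq_Suc atMost_Suc sum_lessThan_6 rank_one_def prod_lessThan_4 arrangement_def lin_def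
      sum_lessThan_3 fact_numeral field_simps power2_eq_square)

lemma symb_double_lines:
  assumes "\<forall>x. quartic_eval F x = (lin L1 x * lin L2 x)^2" and "a \<in> idx4"
  shows "symb F a = double_lines_symbol L1 L2 a"
proof -
  have "symb F a = symb (symbol_coeffs (double_lines_symbol L1 L2)) a"
    using assms by (intro symb_cong_quartic_eval) (simp_all add: quartic_eval_double_lines_symbol)
  then show ?thesis
    by (simp add: symb_symbol_coeffs double_lines_symbol_sort_index[OF assms(2)])
qed

lemma double_lines_symb_eval_zero:
  assumes "\<forall>x. quartic_eval F x = (lin L1 x * lin L2 x)^2"
    and "bij_betw \<sigma> {..<4} {..<4}" and "bij_betw \<tau> {..<4} {..<4}" and "m\<^sub>0 < 4" and "g m\<^sub>0 = eps"
  shows "symb_eval F (\<lambda>a b c. \<Prod>m<4. g m (a!m) (b ! \<sigma> m) (c ! \<tau> m)) = 0"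
proof (rule symb_eval_slots_vanish[where \<kappa> = "1/6" and I = "{..<6}" and V = "arrangement L1 L2"
      and p = L1 and q = L2 and m\<^sub>0 = m\<^sub>0])
  show "symb F a = 1/6 * (\<Sum>r<6. rank_one (arrangement L1 L2 r) a)" if "a \<in> idx4" for a
    using symb_double_lines[OF assms(1) that] by (simp add: double_lines_symbol_def)
qed (use assms in \<open>auto simp: arrangement_def\<close>)

lemma double_lines_imp_conc2_zero:
  assumes "\<forall>x. quartic_eval F x = (lin L1 x * lin L2 x)^2"
  shows "conc2 F x u = 0"
proof -
  define g where "g = (\<lambda>m. [\<lambda>i j k. x i * x j * x k, \<lambda>i j k. x i * x j * x k, eps, eps] ! m)"
  have "conc2 F x u = symb_eval F (\<lambda>a b c. \<Prod>m<4. g m (a!m) (b ! id m) (c ! id m))"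
    unfolding conc2_def g_def by (simp add: prod_lessThan_4 mult_ac)
  also have "\<dots> = 0"
    by (rule double_lines_symb_eval_zero[OF assms bij_betw_id bij_betw_id, where m\<^sub>0 = 2])
       (simp_all add: g_def)
  finally show ?thesis .
qed

lemma double_lines_imp_conc3_zero:
  assumes "\<forall>x. quartic_eval F x = (lin L1 x * lin L2 x)^2"
  shows "conc3 F x u = 0"
proof -
  define g where "g = (\<lambda>m. [\<lambda>i j k. x i * dU u j k, \<lambda>i j k. x i * dU u j k,
                           \<lambda>i j k. dU u i k * x j, eps] ! m)"
  have "conc3 F x u = symb_eval F (\<lambda>a b c. \<Prod>m<4. g m (a!m) (b ! ([1,2,0,3] ! m)) (c ! id m))"
    unfolding conc3_def g_def by (simp add: prod_lessThan_4 mult_ac)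
  also have "\<dots> = 0"
    by (rule double_lines_symb_eval_zero[OF assms bij_betw_perm4 bij_betw_id, where m\<^sub>0 = 3])
       (auto simp: g_def)
  finally show ?thesis .
qed

lemma double_lines_imp_conc4_zero:
  assumes "\<forall>x. quartic_eval F x = (lin L1 x * lin L2 x)^2"
  shows "conc4 F x u = 0"
proof -
  define g where "g = (\<lambda>m. [\<lambda>i j k. x i * dU u j k, \<lambda>i j k. dU u i k * x j, eps, eps] ! m)"
  have "conc4 F x u = symb_eval F (\<lambda>a b c. \<Prod>m<4. g m (a!m) (b ! ([1,0,2,3] ! m)) (c ! ([1,0,2,3] ! m)))"
    unfolding conc4_def g_def by (simp add: prod_lessThan_4 mult_ac)
  also have "\<dots> = 0"
    by (rule double_lines_symb_eval_zero[OF assms bij_betw_perm4 bij_betw_perm4, where m\<^sub>0 = 2])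
       (auto simp: g_def)
  finally show ?thesis .
qed

lemma double_lines_imp_conc5_zero:
  assumes "\<forall>x. quartic_eval F x = (lin L1 x * lin L2 x)^2"
  shows "conc5 F = 0"
proof -
  have "conc5 F = symb_eval F (\<lambda>a b c. \<Prod>m<4. (\<lambda>_. eps) m (a!m) (b ! id m) (c ! id m))"
    unfolding conc5_def by (simp add: prod_lessThan_4 mult_ac)
  also have "\<dots> = 0"
    by (rule double_lines_symb_eval_zero[OF assms bij_betw_id bij_betw_id, where m\<^sub>0 = 0]) auto
  finally show ?thesis .
qed

lemma lin_dU_slot: "(\<Sum>i<3. \<Sum>j<3. \<Sum>k<3. x i * dU u j k * v i * w j * z k) = lin v x * bracket w z u"
  unfolding lin_def bracket_def dU_def by (simp add: sum_lessThan_3 eps_def algebra_simps)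

lemma dU_lin_slot: "(\<Sum>i<3. \<Sum>j<3. \<Sum>k<3. dU u i k * x j * v i * w j * z k) = bracket v z u * lin w x"
  unfolding lin_def bracket_def dU_def by (simp add: sum_lessThan_3 eps_def algebra_simps)

lemma lin_lin_lin_slot:
  "(\<Sum>i<3. \<Sum>j<3. \<Sum>k<3. x i * x j * x k * v i * w j * z k) = lin v x * lin w x * lin z x"
  unfolding lin_def by (simp add: sum_lessThan_3 algebra_simps)

lemma double_lines_imp_conc1_zero:
  assumes "\<forall>x. quartic_eval F x = (lin L1 x * lin L2 x)^2"
  shows "conc1 F x u = 0"
proof -
  define g where "g = (\<lambda>m. [\<lambda>i j k. x i * dU u j k, \<lambda>i j k. x i * x j * x k,
                           \<lambda>i j k. dU u i k * x j, \<lambda>i j k. dU u i k * x j] ! m)"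
  define V where "V = arrangement L1 L2"
  have sq: "symb F a = 1/6 * (\<Sum>r<6. rank_one (V r) a)" if "a \<in> idx4" for a
    using symb_double_lines[OF assms(1) that] by (simp add: double_lines_symbol_def V_def)
  have "conc1 F x u = symb_eval F (\<lambda>a b c. \<Prod>m<4. g m (a!m) (b ! ([3,2,0,1] ! m)) (c ! ([3,0,1,2] ! m)))"
    unfolding conc1_def g_def by (simp add: prod_lessThan_4 mult_ac)
  also have "\<dots> = (1/6)^3 * (\<Sum>r<6. \<Sum>s<6. \<Sum>t<6. \<Prod>m<4. \<Sum>i<3. \<Sum>j<3. \<Sum>k<3.
      g m i j k * V r m i * V s ([3,2,0,1] ! m) j * V t ([3,0,1,2] ! m) k)"
    by (rule symb_eval_slots_rank_one[OF sq bij_betw_perm4 bij_betw_perm4]) auto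
  also have "\<dots> = (1/6)^3 * (\<Sum>r<6. \<Sum>s<6. \<Sum>t<6.
      (lin (V r 0) x * bracket (V s 3) (V t 3) u) * (lin (V r 1) x * lin (V s 2) x * lin (V t 0) x)
      * (bracket (V r 2) (V t 1) u * lin (V s 0) x) * (bracket (V r 3) (V t 2) u * lin (V s 1) x))"
    by (simp add: g_def prod_lessThan_4 lin_dU_slot dU_lin_slot lin_lin_lin_slot)
  also have "\<dots> = 0"
    by (simp add: V_def sum_lessThan_6 arrangement_def bracket_repeat bracket_swap[of L2 L1]
        algebra_simps)
  finally show ?thesis .
qed

theorem mainTheorem7:
  fixes F :: "nat \<Rightarrow> nat \<Rightarrow> nat \<Rightarrow> complex"
  shows "(\<exists>L1 L2 :: nat \<Rightarrow> complex. \<forall>x. quartic_eval F x = (lin L1 x * lin L2 x) ^ 2)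
    \<longleftrightarrow> ((\<forall>x u. conc1 F x u = 0) \<and> (\<forall>x u. conc2 F x u = 0) \<and> (\<forall>x u. conc3 F x u = 0)
         \<and> (\<forall>x u. conc4 F x u = 0) \<and> conc5 F = 0)"
proof
  assume "\<exists>L1 L2 :: nat \<Rightarrow> complex. \<forall>x. quartic_eval F x = (lin L1 x * lin L2 x) ^ 2"
  then obtain L1 L2 where F: "\<forall>x. quartic_eval F x = (lin L1 x * lin L2 x) ^ 2"
    by blast
  show "(\<forall>x u. conc1 F x u = 0) \<and> (\<forall>x u. conc2 F x u = 0) \<and> (\<forall>x u. conc3 F x u = 0)
         \<and> (\<forall>x u. conc4 F x u = 0) \<and> conc5 F = 0"
    using double_lines_imp_conc1_zero[OF F] double_lines_imp_conc2_zero[OF F]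
      double_lines_imp_conc3_zero[OF F] double_lines_imp_conc4_zero[OF F]
      double_lines_imp_conc5_zero[OF F] by blast
next
  assume "(\<forall>x u. conc1 F x u = 0) \<and> (\<forall>x u. conc2 F x u = 0) \<and> (\<forall>x u. conc3 F x u = 0)
         \<and> (\<forall>x u. conc4 F x u = 0) \<and> conc5 F = 0"
  then show "\<exists>L1 L2 :: nat \<Rightarrow> complex. \<forall>x. quartic_eval F x = (lin L1 x * lin L2 x) ^ 2"
    by (simp add: conc1_conc2_zero_imp_double_lines)
qed

end
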